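(* Let $T$ be an iso-unique zero forcing tree, let $\mathcal{P}$ be a minimum path cover of $T$, and let $P: x_1,\ldots,x_\ell$ be a path in $\mathcal{P}$. Let $p=\frac{\ell+1}{2}$ if $\ell$ is odd and $p=\frac{\ell}{2}$ if $\ell$ is even. (a) If $\ell$ is odd, then the connected components of $T-x_p$ that contain $x_{p-1}$ and $x_{p+1}$, respectively, are isomorphic. (b) If $\ell$ is even, then the connected components of $T-x_px_{p+1}$ that contain $x_p$ and $x_{p+1}$, respectively, are isomorphic. Moreover, there is an automorphism of $T$ that maps $x_1$ to $x_\ell$ and $x_\ell$ to $x_1$.
   Context: Zero forcing: in a graph $G$, starting with an initial set $S\subseteq V(G)$ of active vertices, repeatedly apply the rule: if an active vertex $u$ has exactly one non-active neighbor $v$, then $v$ becomes active. $S$ is a zero forcing set if eventually all vertices become active; a minimum zero forcing set is one of minimum size. A graph is an iso-unique zero forcing graph if for every two minimum zero forcing sets $A,B$ there is an automorphism $\phi$ with $\phi(A)=B$. A path cover of a tree $T$ is a set of vertex-disjoint paths of $T$ (a single vertex counts as a path) covering all vertices of $T$; it is minimum if no path cover has fewer paths. $P:x_1,\ldots,x_\ell$ denotes the path with vertices $x_1,\dots,x_\ell$ and edges $x_ix_{i+1}$. *)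

theory Defs
  imports Main
begin

definition graph :: "'a set \<Rightarrow> ('a \<Rightarrow> 'a \<Rightarrow> bool) \<Rightarrow> bool" where
  "graph V E \<longleftrightarrow> finite V \<and>
     (\<forall>u v. E u v \<longrightarrow> u \<in> V \<and> v \<in> V \<and> u \<noteq> v \<and> E v u)"

definition restrict_adj :: "'a set \<Rightarrow> ('a \<Rightarrow> 'a \<Rightarrow> bool) \<Rightarrow> 'a \<Rightarrow> 'a \<Rightarrow> bool" where
  "restrict_adj W E u v \<longleftrightarrow> u \<in> W \<and> v \<in> W \<and> E u v"

definition delete_edge :: "('a \<Rightarrow> 'a \<Rightarrow> bool) \<Rightarrow> 'a \<Rightarrow> 'a \<Rightarrow> 'a \<Rightarrow> 'a \<Rightarrow> bool" where
  "delete_edge E a b u v \<longleftrightarrow> E u v \<and> \<not> ((u = a \<and> v = b) \<or> (u = b \<and> v = a))"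

definition connected_graph :: "'a set \<Rightarrow> ('a \<Rightarrow> 'a \<Rightarrow> bool) \<Rightarrow> bool" where
  "connected_graph V E \<longleftrightarrow> (\<forall>u\<in>V. \<forall>v\<in>V. E\<^sup>*\<^sup>* u v)"

definition is_cycle :: "('a \<Rightarrow> 'a \<Rightarrow> bool) \<Rightarrow> 'a list \<Rightarrow> bool" where
  "is_cycle E c \<longleftrightarrow> length c \<ge> 3 \<and> distinct c \<and>
     (\<forall>i. Suc i < length c \<longrightarrow> E (c ! i) (c ! Suc i)) \<and> E (last c) (hd c)"

definition tree :: "'a set \<Rightarrow> ('a \<Rightarrow> 'a \<Rightarrow> bool) \<Rightarrow> bool" where
  "tree V E \<longleftrightarrow> graph V E \<and> V \<noteq> {} \<and> connected_graph V E \<and> (\<nexists>c. is_cycle E c)"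

definition component :: "'a set \<Rightarrow> ('a \<Rightarrow> 'a \<Rightarrow> bool) \<Rightarrow> 'a \<Rightarrow> 'a set" where
  "component V E x = {v \<in> V. E\<^sup>*\<^sup>* x v}"

definition iso_induced :: "('a \<Rightarrow> 'a \<Rightarrow> bool) \<Rightarrow> 'a set \<Rightarrow> 'a set \<Rightarrow> bool" where
  "iso_induced E A B \<longleftrightarrow> (\<exists>f. bij_betw f A B \<and> (\<forall>u\<in>A. \<forall>v\<in>A. E u v \<longleftrightarrow> E (f u) (f v)))"

definition automorphism :: "'a set \<Rightarrow> ('a \<Rightarrow> 'a \<Rightarrow> bool) \<Rightarrow> ('a \<Rightarrow> 'a) \<Rightarrow> bool" where
  "automorphism V E \<phi> \<longleftrightarrow> bij_betw \<phi> V V \<and> (\<forall>u\<in>V. \<forall>v\<in>V. E u v \<longleftrightarrow> E (\<phi> u) (\<phi> v))"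

inductive_set zf_closure :: "('a \<Rightarrow> 'a \<Rightarrow> bool) \<Rightarrow> 'a set \<Rightarrow> 'a set"
  for E :: "'a \<Rightarrow> 'a \<Rightarrow> bool" and S :: "'a set" where
  init: "x \<in> S \<Longrightarrow> x \<in> zf_closure E S"
| force: "u \<in> zf_closure E S \<Longrightarrow> E u v \<Longrightarrow>
           (\<forall>w. E u w \<and> w \<noteq> v \<longrightarrow> w \<in> zf_closure E S) \<Longrightarrow> v \<in> zf_closure E S"

definition zero_forcing_set :: "'a set \<Rightarrow> ('a \<Rightarrow> 'a \<Rightarrow> bool) \<Rightarrow> 'a set \<Rightarrow> bool" where
  "zero_forcing_set V E S \<longleftrightarrow> S \<subseteq> V \<and> V \<subseteq> zf_closure E S"

definition min_zero_forcing_set :: "'a set \<Rightarrow> ('a \<Rightarrow> 'a \<Rightarrow> bool) \<Rightarrow> 'a set \<Rightarrow> bool" where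
  "min_zero_forcing_set V E S \<longleftrightarrow> zero_forcing_set V E S \<and>
     (\<forall>S'. zero_forcing_set V E S' \<longrightarrow> card S \<le> card S')"

definition iso_unique_zf :: "'a set \<Rightarrow> ('a \<Rightarrow> 'a \<Rightarrow> bool) \<Rightarrow> bool" where
  "iso_unique_zf V E \<longleftrightarrow> (\<forall>A B. min_zero_forcing_set V E A \<longrightarrow> min_zero_forcing_set V E B \<longrightarrow>
     (\<exists>\<phi>. automorphism V E \<phi> \<and> \<phi> ` A = B))"

text \<open>A path x_1,...,x_l is the list [x_1,...,x_l].\<close>
definition is_path :: "'a set \<Rightarrow> ('a \<Rightarrow> 'a \<Rightarrow> bool) \<Rightarrow> 'a list \<Rightarrow> bool" where
  "is_path V E xs \<longleftrightarrow> xs \<noteq> [] \<and> distinct xs \<and> set xs \<subseteq> V \<and>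
     (\<forall>i. Suc i < length xs \<longrightarrow> E (xs ! i) (xs ! Suc i))"

definition path_cover :: "'a set \<Rightarrow> ('a \<Rightarrow> 'a \<Rightarrow> bool) \<Rightarrow> 'a list set \<Rightarrow> bool" where
  "path_cover V E \<P> \<longleftrightarrow> (\<forall>P\<in>\<P>. is_path V E P) \<and>
     (\<forall>P\<in>\<P>. \<forall>Q\<in>\<P>. P \<noteq> Q \<longrightarrow> set P \<inter> set Q = {}) \<and>
     (\<Union>P\<in>\<P>. set P) = V"

definition min_path_cover :: "'a set \<Rightarrow> ('a \<Rightarrow> 'a \<Rightarrow> bool) \<Rightarrow> 'a list set \<Rightarrow> bool" where
  "min_path_cover V E \<P> \<longleftrightarrow> path_cover V E \<P> \<and>
     (\<forall>\<Q>. path_cover V E \<Q> \<longrightarrow> card \<P> \<le> card \<Q>)"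

end

theory Submission
  imports Defs
begin

text \<open>
  Forcing chains turn a zero forcing set into a path cover with at most as many paths. Conversely,
  in a tree the first vertices of the paths of a path cover force everything. Hence the heads of
  \<open>\<P>\<close>, and the heads of \<open>\<P>\<close> with \<open>P\<close> reversed, are two minimum zero forcing sets that differ
  only in \<open>x 1\<close> versus \<open>x l\<close>; iso-uniqueness and an orbit count give an automorphism mapping
  \<open>x 1\<close> to \<open>x l\<close>. Every automorphism of a tree fixes a vertex or flips an edge, and exchanging
  the branch there that contains \<open>x 1\<close> with its image gives an automorphism swapping \<open>x 1\<close> and
  \<open>x l\<close>. As paths in a tree are unique, it reverses \<open>P\<close>: it fixes the middle vertex or flips the
  middle edge of \<open>P\<close> and maps one of the two components in question onto the other.
\<close>

section \<open>Graphs, walks and paths\<close>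

lemma graph_edgeD:
  assumes "graph V E" "E u v"
  shows "u \<in> V" "v \<in> V" "u \<noteq> v" "E v u"
  using assms unfolding graph_def by blast+

lemma graph_symp: "graph V E \<Longrightarrow> symp E"
  by (auto intro: sympI dest: graph_edgeD(4))

lemma graph_rtranclp_closed:
  assumes "graph V E" "E\<^sup>*\<^sup>* u v" "u \<in> V"
  shows "v \<in> V"
  using assms(2,3) by induction (use graph_edgeD(2)[OF assms(1)] in blast)+

lemma graph_delete_edge: "graph V E \<Longrightarrow> graph V (delete_edge E a b)"
  unfolding graph_def delete_edge_def by blast

lemma graph_restrict_adj: "graph V E \<Longrightarrow> W \<subseteq> V \<Longrightarrow> graph W (restrict_adj W E)"
  unfolding graph_def restrict_adj_def by (auto intro: finite_subset)

lemma delete_edge_commute: "delete_edge E b a = delete_edge E a b"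
  unfolding delete_edge_def by (auto simp: fun_eq_iff)

lemma symp_delete_edge: "symp E \<Longrightarrow> symp (delete_edge E a b)"
  unfolding delete_edge_def by (auto intro: sympI dest: sympD)

lemma delete_edge_rtranclp_sym:
  assumes "graph V E" "(delete_edge E a b)\<^sup>*\<^sup>* x y"
  shows "(delete_edge E a b)\<^sup>*\<^sup>* y x"
  by (rule sympD[OF symp_rtranclp[OF symp_delete_edge[OF graph_symp[OF assms(1)]]] assms(2)])

lemma tree_graph: "tree V E \<Longrightarrow> graph V E"
  unfolding tree_def by blast

lemma tree_connected: "tree V E \<Longrightarrow> u \<in> V \<Longrightarrow> v \<in> V \<Longrightarrow> E\<^sup>*\<^sup>* u v"
  unfolding tree_def connected_graph_def by blast

lemma tree_acyclic: "tree V E \<Longrightarrow> \<not> is_cycle E c"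
  unfolding tree_def by blast

lemma rtranclp_reachable_mono:
  assumes "R\<^sup>*\<^sup>* a b" "\<And>y z. R\<^sup>*\<^sup>* a y \<Longrightarrow> R y z \<Longrightarrow> S y z"
  shows "S\<^sup>*\<^sup>* a b"
  using assms(1) by induction (auto intro: rtranclp.rtrancl_into_rtrancl assms(2))

lemma successively_rtranclp_hd:
  "successively R xs \<Longrightarrow> x \<in> set xs \<Longrightarrow> R\<^sup>*\<^sup>* (hd xs) x"
proof (induction xs rule: induct_list012)
  case (3 a b xs)
  then show ?case by (auto intro: converse_rtranclp_into_rtranclp)
qed auto

lemma successively_rtranclp:
  assumes "symp R" "successively R xs" "x \<in> set xs" "y \<in> set xs"
  shows "R\<^sup>*\<^sup>* x y"
proof -
  have "R\<^sup>*\<^sup>* (hd xs) x" "R\<^sup>*\<^sup>* (hd xs) y"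
    using successively_rtranclp_hd assms(2-4) by fast+
  then show ?thesis
    using sympD[OF symp_rtranclp[OF assms(1)]] by (meson rtranclp_trans)
qed

lemma successively_delete_edge:
  "successively E xs \<Longrightarrow> a \<notin> set xs \<or> b \<notin> set xs \<Longrightarrow> successively (delete_edge E a b) xs"
  by (induction xs rule: induct_list012) (auto simp: delete_edge_def)

lemma rtranclp_distinct_walk:
  assumes "R\<^sup>*\<^sup>* u v"
  shows "\<exists>xs. xs \<noteq> [] \<and> hd xs = u \<and> last xs = v \<and> distinct xs \<and> successively R xs"
  using assms
proof (induction rule: converse_rtranclp_induct)
  case base
  show ?case by (intro exI[of _ "[v]"]) auto
next
  case (step u w)
  then obtain ys where ys: "ys \<noteq> []" "hd ys = w" "last ys = v" "distinct ys" "successively R ys"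
    by blast
  show ?case
  proof (cases "u \<in> set ys")
    case True
    then obtain ys1 ys2 where "ys = ys1 @ u # ys2" by (meson split_list)
    with ys show ?thesis
      by (intro exI[of _ "u # ys2"]) (auto simp: successively_append_iff)
  next
    case False
    with ys step(1) show ?thesis
      by (intro exI[of _ "u # ys"]) (auto simp: successively_Cons)
  qed
qed

lemma list_ends_split:
  assumes "xs \<noteq> []" "hd xs = u" "last xs = v" "u \<noteq> v"
  obtains vs where "xs = u # vs @ [v]"
proof -
  obtain ys where ys: "xs = u # ys" using assms(1,2) by (cases xs) auto
  then have "ys \<noteq> []" using assms(3,4) by auto
  then have "ys = butlast ys @ [v]" using append_butlast_last_id assms(3) ys by fastforce
  then show thesis using that ys by blast
qed

lemma set_eq_insert_last_butlast: "xs \<noteq> [] \<Longrightarrow> set xs = insert (last xs) (set (butlast xs))"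
  by (induction xs) auto

lemma is_path_iff:
  "is_path V E xs \<longleftrightarrow> xs \<noteq> [] \<and> distinct xs \<and> set xs \<subseteq> V \<and> successively E xs"
  unfolding is_path_def by (simp add: successively_conv_nth)

lemma is_path_Cons:
  "is_path V E (u # xs) \<longleftrightarrow> u \<in> V \<and> u \<notin> set xs \<and> (xs = [] \<or> E u (hd xs) \<and> is_path V E xs)"
  by (cases xs) (auto simp: is_path_iff)

lemma is_path_rev:
  assumes "graph V E" "is_path V E xs"
  shows "is_path V E (rev xs)"
proof -
  have "successively (\<lambda>x y. E y x) xs"
    using assms(2) sympD[OF graph_symp[OF assms(1)]] unfolding is_path_iff
    by (blast intro: successively_mono)
  then show ?thesis using assms(2) by (simp add: is_path_iff)
qed

lemma graph_path_exists:
  assumes "graph V E" "u \<in> V" "E\<^sup>*\<^sup>* u v"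
  shows "\<exists>xs. is_path V E xs \<and> hd xs = u \<and> last xs = v"
proof -
  obtain xs where xs: "xs \<noteq> []" "hd xs = u" "last xs = v" "distinct xs" "successively E xs"
    using rtranclp_distinct_walk[OF assms(3)] by blast
  have "set xs \<subseteq> V"
    using successively_rtranclp_hd[OF xs(5)] graph_rtranclp_closed[OF assms(1)] xs(2) assms(2)
    by blast
  then show ?thesis using xs by (auto simp: is_path_iff)
qed

lemma tree_path_no_chord:
  assumes "tree V E" "successively E (u # vs @ [w])" "distinct (u # vs @ [w])" "vs \<noteq> []"
  shows "\<not> E w u"
proof
  assume "E w u"
  moreover have "\<forall>i. Suc i < length (u # vs @ [w]) \<longrightarrow> E ((u # vs @ [w]) ! i) ((u # vs @ [w]) ! Suc i)"
    using successively_nth[OF assms(2)] by blast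
  ultimately have "is_cycle E (u # vs @ [w])"
    using assms(3,4) unfolding is_cycle_def by (auto simp: Suc_le_eq)
  then show False using tree_acyclic[OF assms(1)] by blast
qed

lemma tree_edge_bridge:
  assumes T: "tree V E" and "E u v"
  shows "\<not> (delete_edge E u v)\<^sup>*\<^sup>* u v"
proof
  assume "(delete_edge E u v)\<^sup>*\<^sup>* u v"
  from rtranclp_distinct_walk[OF this] obtain xs where xs: "xs \<noteq> []" "hd xs = u" "last xs = v"
    "distinct xs" "successively (delete_edge E u v) xs"
    by blast
  have "u \<noteq> v" "E v u" using graph_edgeD[OF tree_graph[OF T] \<open>E u v\<close>] by auto
  then obtain vs where xs_eq: "xs = u # vs @ [v]" using list_ends_split xs(1-3) by metis
  show False
  proof (cases "vs = []")
    case True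
    then show False using xs(5) xs_eq by (simp add: delete_edge_def)
  next
    case False
    have "successively E xs"
      using xs(5) by (rule successively_mono) (simp add: delete_edge_def)
    then show False
      using tree_path_no_chord[OF T _ _ False] xs(4) xs_eq \<open>E v u\<close> by blast
  qed
qed

section \<open>Automorphisms and components\<close>

lemma automorphism_bij: "automorphism V E \<sigma> \<Longrightarrow> bij_betw \<sigma> V V"
  unfolding automorphism_def by blast

lemma automorphism_adj:
  "automorphism V E \<sigma> \<Longrightarrow> u \<in> V \<Longrightarrow> v \<in> V \<Longrightarrow> E (\<sigma> u) (\<sigma> v) \<longleftrightarrow> E u v"
  unfolding automorphism_def by blast

lemma automorphism_in: "automorphism V E \<sigma> \<Longrightarrow> u \<in> V \<Longrightarrow> \<sigma> u \<in> V"
  using automorphism_bij bij_betwE by blast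

lemma automorphism_eq_iff:
  "automorphism V E \<sigma> \<Longrightarrow> u \<in> V \<Longrightarrow> v \<in> V \<Longrightarrow> \<sigma> u = \<sigma> v \<longleftrightarrow> u = v"
  using automorphism_bij bij_betw_imp_inj_on inj_on_eq_iff by metis

lemma automorphism_id: "automorphism V E id"
  unfolding automorphism_def by simp

lemma automorphism_comp:
  assumes "automorphism V E \<phi>" "automorphism V E \<psi>"
  shows "automorphism V E (\<phi> \<circ> \<psi>)"
  unfolding automorphism_def
  using bij_betw_trans[OF automorphism_bij[OF assms(2)] automorphism_bij[OF assms(1)]]
    automorphism_adj[OF assms(1)] automorphism_adj[OF assms(2)] automorphism_in[OF assms(2)]
  by simp

lemma automorphism_restrict:
  assumes "automorphism V E \<sigma>" "W \<subseteq> V" "\<sigma> ` W = W"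
  shows "automorphism W (restrict_adj W E) \<sigma>"
proof -
  have "inj_on \<sigma> W"
    using assms(1,2) automorphism_bij bij_betw_imp_inj_on inj_on_subset by blast
  then show ?thesis
    using assms automorphism_adj[OF assms(1)] unfolding automorphism_def restrict_adj_def bij_betw_def
    by (auto simp: image_subset_iff subset_iff)
qed

lemma automorphism_delete_edge:
  assumes "automorphism V E \<sigma>" "c \<in> V" "d \<in> V" "\<sigma> c = d" "\<sigma> d = c"
  shows "automorphism V (delete_edge E c d) \<sigma>"
  using assms automorphism_adj[OF assms(1)] automorphism_eq_iff[OF assms(1)]
  unfolding automorphism_def delete_edge_def by metis

lemma automorphism_map_path:
  assumes \<sigma>: "automorphism V E \<sigma>" and P: "is_path V E P"
  shows "is_path V E (map \<sigma> P)"
proof -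
  have "successively E P" "set P \<subseteq> V" "distinct P" using P by (auto simp: is_path_iff)
  then have "successively (\<lambda>x y. E (\<sigma> x) (\<sigma> y)) P"
    using automorphism_adj[OF \<sigma>] by (blast intro: successively_mono)
  moreover have "inj_on \<sigma> (set P)"
    using automorphism_bij[OF \<sigma>] \<open>set P \<subseteq> V\<close> bij_betw_imp_inj_on inj_on_subset by blast
  ultimately show ?thesis
    using P \<open>set P \<subseteq> V\<close> automorphism_in[OF \<sigma>]
    by (auto simp: is_path_iff successively_map distinct_map)
qed

lemma component_image:
  assumes \<sigma>: "bij_betw \<sigma> V V" and gF: "graph V F" and gG: "graph V G"
    and pres: "\<And>u v. u \<in> V \<Longrightarrow> v \<in> V \<Longrightarrow> G (\<sigma> u) (\<sigma> v) \<longleftrightarrow> F u v" and a: "a \<in> V"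
  shows "\<sigma> ` component V F a = component V G (\<sigma> a)"
proof
  have "G\<^sup>*\<^sup>* (\<sigma> a) (\<sigma> v)" if "F\<^sup>*\<^sup>* a v" for v
    using that
  proof induction
    case (step y z)
    have "y \<in> V" "z \<in> V" using graph_edgeD[OF gF step(2)] by auto
    then show ?case using step pres by (meson rtranclp.rtrancl_into_rtrancl)
  qed simp
  then show "\<sigma> ` component V F a \<subseteq> component V G (\<sigma> a)"
    unfolding component_def using bij_betwE[OF \<sigma>] by blast
next
  have "\<exists>v\<in>V. F\<^sup>*\<^sup>* a v \<and> z = \<sigma> v" if "G\<^sup>*\<^sup>* (\<sigma> a) z" for z
    using that
  proof induction
    case base
    show ?case using a by blast
  next
    case (step y z)
    then obtain v where v: "v \<in> V" "F\<^sup>*\<^sup>* a v" "y = \<sigma> v" by blast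
    have "z \<in> V" using graph_edgeD[OF gG step(2)] by blast
    then obtain v' where v': "v' \<in> V" "z = \<sigma> v'" using \<sigma> unfolding bij_betw_def by blast
    have "F v v'" using pres[OF v(1) v'(1)] step(2) v(3) v'(2) by simp
    then show ?case using v v' by (blast intro: rtranclp.rtrancl_into_rtrancl)
  qed
  then show "component V G (\<sigma> a) \<subseteq> \<sigma> ` component V F a"
    unfolding component_def by blast
qed

lemma automorphism_iso_induced_components:
  assumes "graph V F" "automorphism V F \<sigma>" "a \<in> V"
  shows "iso_induced F (component V F a) (component V F (\<sigma> a))"
proof -
  have sub: "component V F a \<subseteq> V" unfolding component_def by blast
  have "\<sigma> ` component V F a = component V F (\<sigma> a)"
    using component_image[OF automorphism_bij[OF assms(2)] assms(1,1)] automorphism_adj[OF assms(2)]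
      assms(3)
    by blast
  moreover have "inj_on \<sigma> (component V F a)"
    using automorphism_bij[OF assms(2)] sub bij_betw_imp_inj_on inj_on_subset by blast
  ultimately show ?thesis
    unfolding iso_induced_def bij_betw_def using automorphism_adj[OF assms(2)] sub by blast
qed

section \<open>Branches of a tree\<close>

definition branch :: "'a set \<Rightarrow> ('a \<Rightarrow> 'a \<Rightarrow> bool) \<Rightarrow> 'a \<Rightarrow> 'a \<Rightarrow> 'a set" where
  "branch V E c d = component V (delete_edge E c d) d"

lemma mem_branch_iff: "z \<in> branch V E c d \<longleftrightarrow> z \<in> V \<and> (delete_edge E c d)\<^sup>*\<^sup>* d z"
  unfolding branch_def component_def by simp

lemma branch_subset_vertices: "branch V E c d \<subseteq> V"
  by (auto simp: mem_branch_iff)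

lemma branch_self: "d \<in> V \<Longrightarrow> d \<in> branch V E c d"
  by (simp add: mem_branch_iff)

lemma branch_closed:
  "x \<in> branch V E c d \<Longrightarrow> delete_edge E c d x y \<Longrightarrow> y \<in> V \<Longrightarrow> y \<in> branch V E c d"
  by (auto simp: mem_branch_iff intro: rtranclp.rtrancl_into_rtrancl)

lemma path_in_branch:
  assumes "graph V E" "is_path V E (c # d # xs)"
  shows "set (d # xs) \<subseteq> branch V E c d"
proof -
  have "successively E (d # xs)" "c \<notin> set (d # xs)" "set (d # xs) \<subseteq> V"
    using assms(2) by (auto simp: is_path_iff)
  then have "successively (delete_edge E c d) (d # xs)" by (simp add: successively_delete_edge)
  then show ?thesis
    using successively_rtranclp_hd[of _ "d # xs"] \<open>set (d # xs) \<subseteq> V\<close> by (fastforce simp: mem_branch_iff)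
qed

lemma root_notin_branch:
  assumes T: "tree V E" and "E c d"
  shows "c \<notin> branch V E c d"
proof
  assume "c \<in> branch V E c d"
  then have "(delete_edge E c d)\<^sup>*\<^sup>* c d"
    using delete_edge_rtranclp_sym[OF tree_graph[OF T]] by (simp add: mem_branch_iff)
  then show False using tree_edge_bridge[OF T \<open>E c d\<close>] by blast
qed

lemma branch_boundary:
  assumes T: "tree V E" and "E c d" and u: "u \<in> branch V E c d" and w: "w \<notin> branch V E c d"
    and "E u w"
  shows "u = d \<and> w = c"
proof -
  have "w \<in> V" using graph_edgeD[OF tree_graph[OF T] \<open>E u w\<close>] by blast
  then have "\<not> delete_edge E c d u w" using branch_closed[OF u] w by metis
  moreover have "u \<noteq> c" using root_notin_branch[OF T \<open>E c d\<close>] u by blast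
  ultimately show ?thesis using \<open>E u w\<close> unfolding delete_edge_def by blast
qed

lemma branches_of_edge_disjoint:
  assumes T: "tree V E" and "E c d"
  shows "branch V E c d \<inter> branch V E d c = {}"
proof -
  let ?F = "delete_edge E c d"
  have "\<not> (?F\<^sup>*\<^sup>* d z \<and> ?F\<^sup>*\<^sup>* c z)" for z
  proof
    assume "?F\<^sup>*\<^sup>* d z \<and> ?F\<^sup>*\<^sup>* c z"
    then have "?F\<^sup>*\<^sup>* c z" "?F\<^sup>*\<^sup>* z d"
      using delete_edge_rtranclp_sym[OF tree_graph[OF T]] by blast+
    then show False using tree_edge_bridge[OF T \<open>E c d\<close>] rtranclp_trans by metis
  qed
  then show ?thesis by (auto simp: mem_branch_iff delete_edge_commute[of E d c])
qed

lemma branches_of_edge_cover: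
  assumes T: "tree V E" and "E c d"
  shows "branch V E c d \<union> branch V E d c = V"
proof -
  have c: "c \<in> V" and d: "d \<in> V" using graph_edgeD[OF tree_graph[OF T] \<open>E c d\<close>] by auto
  have reach: "w \<in> branch V E c d \<union> branch V E d c" if "E\<^sup>*\<^sup>* c w" for w
    using that
  proof induction
    case base
    show ?case using branch_self[OF c] by blast
  next
    case (step y z)
    have "z \<in> V" using graph_edgeD[OF tree_graph[OF T] step(2)] by blast
    show ?case
    proof (cases "delete_edge E c d y z")
      case True
      then have "delete_edge E d c y z" by (simp add: delete_edge_commute)
      then show ?thesis
        using step(3) branch_closed[OF _ True \<open>z \<in> V\<close>] branch_closed[OF _ _ \<open>z \<in> V\<close>]
        by blast
    next
      case False
      then have "z = c \<or> z = d" using step(2) unfolding delete_edge_def by blast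
      then show ?thesis using branch_self[OF c] branch_self[OF d] by blast
    qed
  qed
  have "V \<subseteq> branch V E c d \<union> branch V E d c"
  proof
    fix w assume "w \<in> V"
    then show "w \<in> branch V E c d \<union> branch V E d c" by (rule reach[OF tree_connected[OF T c]])
  qed
  then show ?thesis using branch_subset_vertices[of V E c d] branch_subset_vertices[of V E d c] by blast
qed

lemma branch_reach_avoiding:
  assumes g: "graph V E" and z: "z \<in> branch V E c d" and v: "v \<notin> branch V E c d"
  shows "(delete_edge E v u)\<^sup>*\<^sup>* d z"
proof -
  let ?F = "delete_edge E c d"
  have "?F\<^sup>*\<^sup>* d z" using z by (simp add: mem_branch_iff)
  moreover have "delete_edge E v u y y'" if "?F\<^sup>*\<^sup>* d y" "?F y y'" for y y'
  proof -
    have "y \<in> V" "y' \<in> V" using graph_edgeD[OF graph_delete_edge[OF g] \<open>?F y y'\<close>] by auto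
    then have "y \<in> branch V E c d" using that(1) by (simp add: mem_branch_iff)
    then have "y' \<in> branch V E c d" using branch_closed \<open>?F y y'\<close> \<open>y' \<in> V\<close> by metis
    then show ?thesis
      using \<open>y \<in> branch V E c d\<close> v \<open>?F y y'\<close> unfolding delete_edge_def by blast
  qed
  ultimately show ?thesis by (rule rtranclp_reachable_mono)
qed

lemma branches_at_vertex_disjoint:
  assumes T: "tree V E" and "E m a" "E m b" "a \<noteq> b"
  shows "branch V E m a \<inter> branch V E m b = {}"
proof (rule ccontr)
  let ?F = "delete_edge E m a"
  have g: "graph V E" using tree_graph[OF T] .
  assume "branch V E m a \<inter> branch V E m b \<noteq> {}"
  then obtain z where za: "z \<in> branch V E m a" and zb: "z \<in> branch V E m b" by blast
  have "?F\<^sup>*\<^sup>* b z"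
    using branch_reach_avoiding[OF g zb root_notin_branch[OF T \<open>E m b\<close>]] .
  moreover have "?F\<^sup>*\<^sup>* z a" using za delete_edge_rtranclp_sym[OF g] by (simp add: mem_branch_iff)
  ultimately have "?F\<^sup>*\<^sup>* b a" by (rule rtranclp_trans)
  then have "?F\<^sup>*\<^sup>* a b" by (rule delete_edge_rtranclp_sym[OF g])
  moreover have "?F b m"
    using graph_edgeD[OF g \<open>E m b\<close>] \<open>a \<noteq> b\<close> unfolding delete_edge_def by blast
  ultimately have "?F\<^sup>*\<^sup>* a m" by (rule rtranclp.rtrancl_into_rtrancl)
  then show False
    using tree_edge_bridge[OF T \<open>E m a\<close>] delete_edge_rtranclp_sym[OF g] by blast
qed

lemma branch_nested:
  assumes T: "tree V E" and "E h w" "E h' w'"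
    and h': "h' \<in> branch V E h w" and h: "h \<notin> branch V E h' w'"
  shows "branch V E h' w' \<subseteq> branch V E h w"
proof
  fix z assume z: "z \<in> branch V E h' w'"
  have g: "graph V E" using tree_graph[OF T] .
  have w': "w' \<in> V" using graph_edgeD[OF g \<open>E h' w'\<close>] by blast
  have "h' \<noteq> h" using h' root_notin_branch[OF T \<open>E h w\<close>] by blast
  moreover have "w' \<noteq> h" using h branch_self[OF w'] by blast
  ultimately have "delete_edge E h w h' w'" using \<open>E h' w'\<close> unfolding delete_edge_def by blast
  then have "(delete_edge E h w)\<^sup>*\<^sup>* w w'" using branch_closed h' w' by (metis mem_branch_iff)
  moreover have "(delete_edge E h w)\<^sup>*\<^sup>* w' z" using branch_reach_avoiding[OF g z h] .
  ultimately show "z \<in> branch V E h w"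
    using z by (auto simp: mem_branch_iff intro: rtranclp_trans)
qed

lemma automorphism_image_branch:
  assumes g: "graph V E" and \<sigma>: "automorphism V E \<sigma>" and "c \<in> V" "d \<in> V"
  shows "\<sigma> ` branch V E c d = branch V E (\<sigma> c) (\<sigma> d)"
  unfolding branch_def
proof (rule component_image[OF automorphism_bij[OF \<sigma>] graph_delete_edge[OF g] graph_delete_edge[OF g] _ \<open>d \<in> V\<close>])
  fix u v assume "u \<in> V" "v \<in> V"
  then show "delete_edge E (\<sigma> c) (\<sigma> d) (\<sigma> u) (\<sigma> v) \<longleftrightarrow> delete_edge E c d u v"
    using automorphism_adj[OF \<sigma>] automorphism_eq_iff[OF \<sigma>] assms(3,4)
    unfolding delete_edge_def by metis
qed

lemma tree_path_unique:
  assumes T: "tree V E" and "is_path V E xs" "is_path V E ys" "hd xs = hd ys" "last xs = last ys"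
  shows "xs = ys"
  using assms(2-)
proof (induction xs arbitrary: ys)
  case (Cons u xs)
  have g: "graph V E" using tree_graph[OF T] .
  obtain ys' where ys: "ys = u # ys'" using Cons.prems by (cases ys) (auto simp: is_path_iff)
  have "u \<notin> set xs" "u \<notin> set ys'" using Cons.prems(1,2) ys by (simp_all add: is_path_Cons)
  moreover have "last (u # xs) = last (u # ys')" using Cons.prems(4) ys by simp
  ultimately have "xs = [] \<longleftrightarrow> ys' = []" by (cases xs; cases ys') (auto split: if_splits)
  show ?case
  proof (cases "xs = []")
    case False
    then have "ys' \<noteq> []" using \<open>xs = [] \<longleftrightarrow> ys' = []\<close> by blast
    have paths: "is_path V E (u # hd xs # tl xs)" "is_path V E (u # hd ys' # tl ys')"
      using Cons.prems(1,2) False \<open>ys' \<noteq> []\<close> ys by simp_all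
    show ?thesis
    proof (cases "hd xs = hd ys'")
      case True
      then show ?thesis
        using Cons.IH[of ys'] Cons.prems ys False \<open>ys' \<noteq> []\<close> by (auto simp: is_path_Cons)
    next
      case False
      have "last xs \<in> set (hd xs # tl xs)" "last ys' \<in> set (hd ys' # tl ys')"
        using \<open>xs \<noteq> []\<close> \<open>ys' \<noteq> []\<close> by simp_all
      then have "last xs \<in> branch V E u (hd xs)" "last ys' \<in> branch V E u (hd ys')"
        using path_in_branch[OF g paths(1)] path_in_branch[OF g paths(2)] by blast+
      moreover have "last ys' = last xs" using Cons.prems ys \<open>xs \<noteq> []\<close> \<open>ys' \<noteq> []\<close> by simp
      moreover have "branch V E u (hd xs) \<inter> branch V E u (hd ys') = {}"
        by (rule branches_at_vertex_disjoint[OF T _ _ False]) (use paths in \<open>simp_all add: is_path_Cons\<close>)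
      ultimately show ?thesis by auto
    qed
  qed (use \<open>xs = [] \<longleftrightarrow> ys' = []\<close> ys in simp)
qed (simp add: is_path_iff)

lemma automorphism_reverses_path:
  assumes T: "tree V E" and \<sigma>: "automorphism V E \<sigma>" and P: "is_path V E P"
    and "\<sigma> (hd P) = last P" "\<sigma> (last P) = hd P"
  shows "map \<sigma> P = rev P"
  using tree_path_unique[OF T automorphism_map_path[OF \<sigma> P] is_path_rev[OF tree_graph[OF T] P]]
    assms(4,5) P
  by (auto simp: is_path_iff hd_map last_map hd_rev last_rev)

section \<open>Automorphisms of trees\<close>

lemma involution_automorphism:
  assumes "\<And>z. z \<in> V \<Longrightarrow> \<sigma> z \<in> V" "\<And>z. z \<in> V \<Longrightarrow> \<sigma> (\<sigma> z) = z"
    and "\<And>u v. u \<in> V \<Longrightarrow> v \<in> V \<Longrightarrow> E u v \<Longrightarrow> E (\<sigma> u) (\<sigma> v)"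
  shows "automorphism V E \<sigma>"
proof -
  have "bij_betw \<sigma> V V" by (rule bij_betw_byWitness[where f' = \<sigma>]) (use assms(1,2) in auto)
  moreover have "E (\<sigma> u) (\<sigma> v) \<longleftrightarrow> E u v" if "u \<in> V" "v \<in> V" for u v
    using assms(3)[OF that] assms(3)[OF assms(1)[OF that(1)] assms(1)[OF that(2)]] assms(2) that
    by metis
  ultimately show ?thesis unfolding automorphism_def by blast
qed

definition swap_with_image :: "('a \<Rightarrow> 'a) \<Rightarrow> 'a set \<Rightarrow> 'a \<Rightarrow> 'a" where
  "swap_with_image \<psi> C z = (if z \<in> C then \<psi> z else if z \<in> \<psi> ` C then the_inv_into C \<psi> z else z)"

lemma swap_with_image_outside: "z \<notin> C \<union> \<psi> ` C \<Longrightarrow> swap_with_image \<psi> C z = z"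
  unfolding swap_with_image_def by simp

lemma swap_with_image_exchanges:
  assumes "inj_on \<psi> C" "C \<inter> \<psi> ` C = {}" "c \<in> C"
  shows "swap_with_image \<psi> C c = \<psi> c" "swap_with_image \<psi> C (\<psi> c) = c"
  using assms the_inv_into_f_f[OF assms(1,3)] unfolding swap_with_image_def by auto

context
  fixes V E \<psi> C
  assumes g: "graph V E" and \<psi>: "automorphism V E \<psi>" and CV: "C \<subseteq> V"
    and disj: "C \<inter> \<psi> ` C = {}"
    and boundary: "\<And>u w. u \<in> C \<union> \<psi> ` C \<Longrightarrow> w \<notin> C \<union> \<psi> ` C \<Longrightarrow> E u w \<Longrightarrow> \<psi> w = w"
    and cross: "\<And>u v. u \<in> C \<Longrightarrow> v \<in> C \<Longrightarrow> E u (\<psi> v) \<longleftrightarrow> E (\<psi> u) v"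
begin

private lemma inj_on_C: "inj_on \<psi> C"
  using automorphism_bij[OF \<psi>] CV bij_betw_imp_inj_on inj_on_subset by blast

private lemma swap_C: "c \<in> C \<Longrightarrow> swap_with_image \<psi> C c = \<psi> c"
  and swap_image: "c \<in> C \<Longrightarrow> swap_with_image \<psi> C (\<psi> c) = c"
  using swap_with_image_exchanges[OF inj_on_C disj] by blast+

private lemma adj_C: "E (\<psi> u) (\<psi> v) \<longleftrightarrow> E u v" if "u \<in> C" "v \<in> C"
  using automorphism_adj[OF \<psi>] CV that by blast

private lemma swap_adj_from_C:
  assumes "E u v" "u \<in> C"
  shows "E (swap_with_image \<psi> C u) (swap_with_image \<psi> C v)"
proof (cases "v \<in> C \<union> \<psi> ` C")
  case True
  then consider "v \<in> C" | v' where "v' \<in> C" "v = \<psi> v'" by blast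
  then show ?thesis
  proof cases
    case 1
    then show ?thesis using adj_C assms swap_C by simp
  next
    case 2
    then show ?thesis using cross assms swap_C swap_image by simp
  qed
next
  case False
  then have "\<psi> v = v" using boundary assms by blast
  moreover have "v \<in> V" "u \<in> V" using graph_edgeD[OF g assms(1)] by auto
  ultimately show ?thesis
    using automorphism_adj[OF \<psi>, of u v] assms swap_C swap_with_image_outside[OF False] by simp
qed

private lemma swap_adj_from_image:
  assumes "E u v" "u \<in> \<psi> ` C" "v \<notin> C"
  shows "E (swap_with_image \<psi> C u) (swap_with_image \<psi> C v)"
proof -
  obtain u' where u': "u' \<in> C" "u = \<psi> u'" using assms(2) by blast
  show ?thesis
  proof (cases "v \<in> \<psi> ` C")
    case True
    then obtain v' where "v' \<in> C" "v = \<psi> v'" by blast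
    then show ?thesis using adj_C u' assms(1) swap_image by simp
  next
    case False
    then have "\<psi> v = v" using boundary assms by blast
    moreover have "v \<in> V" using graph_edgeD[OF g assms(1)] by auto
    ultimately show ?thesis
      using automorphism_adj[OF \<psi>, of u' v] u' CV assms swap_image swap_with_image_outside[of v C \<psi>]
        False
      by auto
  qed
qed

lemma automorphism_swap_with_image: "automorphism V E (swap_with_image \<psi> C)"
proof (rule involution_automorphism)
  have \<psi>C: "\<psi> ` C \<subseteq> V" using CV automorphism_in[OF \<psi>] by blast
  show "swap_with_image \<psi> C z \<in> V" if "z \<in> V" for z
    using that CV \<psi>C swap_C swap_image swap_with_image_outside[of z C \<psi>] by (cases "z \<in> C \<union> \<psi> ` C") auto
  show "swap_with_image \<psi> C (swap_with_image \<psi> C z) = z" for z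
    using swap_C swap_image swap_with_image_outside[of z C \<psi>] by (cases "z \<in> C \<union> \<psi> ` C") auto
  have sym: "E u v \<longleftrightarrow> E v u" for u v using graph_edgeD(4)[OF g] by blast
  show "E (swap_with_image \<psi> C u) (swap_with_image \<psi> C v)" if "E u v" for u v
  proof (cases "u \<in> C \<or> (u \<in> \<psi> ` C \<and> v \<notin> C) \<or> v \<in> C \<or> (v \<in> \<psi> ` C \<and> u \<notin> C)")
    case True
    then show ?thesis using swap_adj_from_C swap_adj_from_image that sym by blast
  next
    case False
    then show ?thesis using that swap_with_image_outside[of u C \<psi>] swap_with_image_outside[of v C \<psi>]
      by auto
  qed
qed

lemma automorphism_exchanging_with_image:
  "x \<in> C \<Longrightarrow> \<exists>\<sigma>. automorphism V E \<sigma> \<and> \<sigma> x = \<psi> x \<and> \<sigma> (\<psi> x) = x"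
  using automorphism_swap_with_image swap_C swap_image by blast

end

lemma tree_swap_at_fixed_vertex:
  assumes T: "tree V E" and \<psi>: "automorphism V E \<psi>" and "E m a" "\<psi> m = m" "\<psi> a \<noteq> a"
    and x: "x \<in> branch V E m a"
  shows "\<exists>\<sigma>. automorphism V E \<sigma> \<and> \<sigma> x = \<psi> x \<and> \<sigma> (\<psi> x) = x"
proof -
  let ?C = "branch V E m a" and ?D = "branch V E m (\<psi> a)"
  have g: "graph V E" using tree_graph[OF T] .
  have m: "m \<in> V" and a: "a \<in> V" using graph_edgeD[OF g \<open>E m a\<close>] by auto
  have img: "\<psi> ` ?C = ?D"
    using automorphism_image_branch[OF g \<psi> m a] \<open>\<psi> m = m\<close> by simp
  have "E m (\<psi> a)" using automorphism_adj[OF \<psi> m a] \<open>E m a\<close> \<open>\<psi> m = m\<close> by simp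
  have disj: "?C \<inter> ?D = {}"
    using branches_at_vertex_disjoint[OF T \<open>E m a\<close> \<open>E m (\<psi> a)\<close>] \<open>\<psi> a \<noteq> a\<close> by simp
  have leave: "w = m" if "u \<in> ?C \<union> ?D" "w \<notin> ?C \<union> ?D" "E u w" for u w
    using that branch_boundary[OF T \<open>E m a\<close>, of u w] branch_boundary[OF T \<open>E m (\<psi> a)\<close>, of u w]
    by blast
  have no_cross: "\<not> E u w" if "u \<in> ?C" "w \<in> ?D" for u w
  proof
    assume "E u w"
    then have "w = m" using branch_boundary[OF T \<open>E m a\<close> \<open>u \<in> ?C\<close>, of w] disj that by blast
    then show False using root_notin_branch[OF T \<open>E m (\<psi> a)\<close>] \<open>w \<in> ?D\<close> by blast
  qed
  have sym: "E u v \<longleftrightarrow> E v u" for u v using graph_edgeD(4)[OF g] by blast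
  show ?thesis
  proof (rule automorphism_exchanging_with_image[OF g \<psi> branch_subset_vertices _ _ _ x])
    show "?C \<inter> \<psi> ` ?C = {}" using disj img by simp
    show "\<psi> w = w" if "u \<in> ?C \<union> \<psi> ` ?C" "w \<notin> ?C \<union> \<psi> ` ?C" "E u w" for u w
      using leave[of u w] that img \<open>\<psi> m = m\<close> by simp
    show "E u (\<psi> v) \<longleftrightarrow> E (\<psi> u) v" if "u \<in> ?C" "v \<in> ?C" for u v
      using no_cross[of u "\<psi> v"] no_cross[of v "\<psi> u"] that img sym by blast
  qed
qed

lemma tree_swap_at_flipped_edge:
  assumes T: "tree V E" and \<psi>: "automorphism V E \<psi>" and "E c d" "\<psi> c = d" "\<psi> d = c"
    and x: "x \<in> branch V E d c"
  shows "\<exists>\<sigma>. automorphism V E \<sigma> \<and> \<sigma> x = \<psi> x \<and> \<sigma> (\<psi> x) = x"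
proof -
  let ?C = "branch V E d c" and ?D = "branch V E c d"
  have g: "graph V E" using tree_graph[OF T] .
  have c: "c \<in> V" and d: "d \<in> V" and "E d c" using graph_edgeD[OF g \<open>E c d\<close>] by auto
  have img: "\<psi> ` ?C = ?D"
    using automorphism_image_branch[OF g \<psi> d c] \<open>\<psi> c = d\<close> \<open>\<psi> d = c\<close> by simp
  have disj: "?C \<inter> ?D = {}" using branches_of_edge_disjoint[OF T \<open>E c d\<close>] by blast
  have cover: "?C \<union> ?D = V" using branches_of_edge_cover[OF T \<open>E c d\<close>] by blast
  have cross: "E u (\<psi> v) \<longleftrightarrow> u = c \<and> v = c" if "u \<in> ?C" "v \<in> ?C" for u v
  proof
    assume "E u (\<psi> v)"
    moreover have "\<psi> v \<notin> ?C" using img disj that(2) by blast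
    ultimately have "u = c" "\<psi> v = d"
      using branch_boundary[OF T \<open>E d c\<close> \<open>u \<in> ?C\<close>, of "\<psi> v"] by auto
    then show "u = c \<and> v = c"
      using automorphism_eq_iff[OF \<psi>, of v c] \<open>\<psi> c = d\<close> that(2) c
        branch_subset_vertices[of V E d c] by auto
  qed (use \<open>E c d\<close> \<open>\<psi> c = d\<close> in simp)
  have sym: "E u v \<longleftrightarrow> E v u" for u v using graph_edgeD(4)[OF g] by blast
  show ?thesis
  proof (rule automorphism_exchanging_with_image[OF g \<psi> branch_subset_vertices _ _ _ x])
    show "?C \<inter> \<psi> ` ?C = {}" using disj img by simp
    show "\<psi> w = w" if "u \<in> ?C \<union> \<psi> ` ?C" "w \<notin> ?C \<union> \<psi> ` ?C" "E u w" for u w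
      using that cover img graph_edgeD(2)[OF g \<open>E u w\<close>] by blast
    show "E u (\<psi> v) \<longleftrightarrow> E (\<psi> u) v" if "u \<in> ?C" "v \<in> ?C" for u v
      using cross[OF that] cross[OF that(2,1)] sym[of "\<psi> u" v] by blast
  qed
qed

lemma tree_fixed_branch_towards:
  assumes T: "tree V E" and \<psi>: "automorphism V E \<psi>" and "r \<in> V" "\<psi> r = r" "x \<in> V" "\<psi> x \<noteq> x"
  shows "\<exists>m a. E m a \<and> \<psi> m = m \<and> \<psi> a \<noteq> a \<and> x \<in> branch V E m a"
proof -
  have g: "graph V E" using tree_graph[OF T] .
  obtain \<pi> where \<pi>: "is_path V E \<pi>" "hd \<pi> = r" "last \<pi> = x"
    using graph_path_exists[OF g \<open>r \<in> V\<close> tree_connected[OF T \<open>r \<in> V\<close> \<open>x \<in> V\<close>]] by blast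
  have "x \<in> set \<pi>" using \<pi> by (auto simp: is_path_iff)
  then obtain ys a zs where split: "\<pi> = ys @ a # zs" "\<psi> a \<noteq> a" "\<forall>y\<in>set ys. \<psi> y = y"
    using split_list_first_prop[of \<pi> "\<lambda>y. \<psi> y \<noteq> y"] \<open>\<psi> x \<noteq> x\<close> by blast
  have "ys \<noteq> []" using split \<pi>(2) \<open>\<psi> r = r\<close> by auto
  then obtain ys' m where "ys = ys' @ [m]" by (cases ys rule: rev_cases) auto
  then have \<pi>_eq: "\<pi> = ys' @ m # a # zs" and "\<psi> m = m" using split by auto
  have path: "is_path V E (m # a # zs)"
    using \<pi>(1) unfolding \<pi>_eq by (auto simp: is_path_iff successively_append_iff)
  then have "E m a" by (simp add: is_path_Cons)
  moreover have "x \<in> set (a # zs)" using \<pi>(3) \<pi>_eq by (cases zs rule: rev_cases) auto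
  then have "x \<in> branch V E m a" using path_in_branch[OF g path] by blast
  ultimately show ?thesis using \<open>\<psi> m = m\<close> \<open>\<psi> a \<noteq> a\<close> by blast
qed

text \<open>An isolated vertex also counts as a leaf.\<close>
definition leaf :: "'a set \<Rightarrow> ('a \<Rightarrow> 'a \<Rightarrow> bool) \<Rightarrow> 'a \<Rightarrow> bool" where
  "leaf V E v \<longleftrightarrow> v \<in> V \<and> (\<forall>w1 w2. E v w1 \<and> E v w2 \<longrightarrow> w1 = w2)"

lemma path_interior_not_leaf:
  assumes g: "graph V E" and "successively E xs" "distinct xs" "0 < k" "Suc k < length xs"
  shows "\<not> leaf V E (xs ! k)"
proof -
  have "E (xs ! (k - 1)) (xs ! k)" "E (xs ! k) (xs ! Suc k)"
    using successively_nth[OF assms(2), of "k - 1"] successively_nth[OF assms(2), of k] assms(4,5)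
    by auto
  moreover have "xs ! (k - 1) \<noteq> xs ! Suc k"
    using nth_eq_iff_index_eq[OF assms(3)] assms(4,5) by auto
  ultimately show ?thesis unfolding leaf_def using graph_edgeD(4)[OF g] by blast
qed

text \<open>The last vertex of a longest path is a leaf: a second neighbour would either extend the
  path or close a cycle.\<close>
lemma tree_has_leaf:
  assumes T: "tree V E"
  shows "\<exists>v. leaf V E v"
proof -
  have g: "graph V E" using tree_graph[OF T] .
  have fin: "finite V" using g unfolding graph_def by blast
  obtain v where "v \<in> V" using T unfolding tree_def by blast
  then have "is_path V E [v]" by (simp add: is_path_iff)
  moreover have "length xs < Suc (card V)" if "is_path V E xs" for xs
    using that distinct_card card_mono[OF fin] unfolding is_path_iff by (metis less_Suc_eq_le)
  ultimately obtain xs where xs: "is_path V E xs"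
    and longest: "\<And>ys. is_path V E ys \<Longrightarrow> length ys \<le> length xs"
    using ex_has_greatest_nat[of "is_path V E" "[v]" length "Suc (card V)"] by blast
  have xs': "xs \<noteq> []" "distinct xs" "set xs \<subseteq> V" "successively E xs"
    using xs by (auto simp: is_path_iff)
  define y where "y = last xs"
  have neighbour: "w = last (butlast xs)" if "E y w" for w
  proof -
    have "w \<in> set xs"
    proof (rule ccontr)
      assume "w \<notin> set xs"
      then have "is_path V E (xs @ [w])"
        using xs' that graph_edgeD(2)[OF g that] unfolding y_def
        by (auto simp: is_path_iff successively_append_iff)
      then show False using longest[of "xs @ [w]"] by simp
    qed
    then obtain as bs where as_bs: "xs = as @ w # bs" by (meson split_list)
    have "w \<noteq> y" using graph_edgeD(3)[OF g that] by simp
    then have "bs \<noteq> []" "last bs = y" using as_bs unfolding y_def by auto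
    define bs' where "bs' = butlast bs"
    have xs_eq: "xs = as @ (w # bs' @ [y])"
      using as_bs append_butlast_last_id[OF \<open>bs \<noteq> []\<close>] \<open>last bs = y\<close> unfolding bs'_def by simp
    have "successively E (as @ (w # bs' @ [y]))" "distinct (as @ (w # bs' @ [y]))"
      using xs'(2,4) xs_eq by simp_all
    then have "successively E (w # bs' @ [y])" "distinct (w # bs' @ [y])"
      by (simp_all only: successively_append_iff distinct_append)
    then have "bs' = []" using tree_path_no_chord[OF T] that by blast
    then show ?thesis using xs_eq by (simp add: butlast_append)
  qed
  have "y \<in> V" using xs' unfolding y_def by auto
  then have "leaf V E y" unfolding leaf_def using neighbour by blast
  then show ?thesis by blast
qed

lemma tree_remove_leaves:
  assumes T: "tree V E" and inner: "\<exists>v\<in>V. \<not> leaf V E v"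
  shows "tree (V - Collect (leaf V E)) (restrict_adj (V - Collect (leaf V E)) E)"
proof -
  let ?W = "V - Collect (leaf V E)"
  let ?F = "restrict_adj ?W E"
  have g: "graph V E" using tree_graph[OF T] .
  have "\<not> is_cycle ?F c" for c
    using tree_acyclic[OF T, of c] unfolding is_cycle_def restrict_adj_def by blast
  moreover have "?F\<^sup>*\<^sup>* u v" if u: "u \<in> ?W" and v: "v \<in> ?W" for u v
  proof -
    obtain \<pi> where \<pi>: "is_path V E \<pi>" "hd \<pi> = u" "last \<pi> = v"
      using graph_path_exists[OF g _ tree_connected[OF T]] u v by blast
    have "\<pi> ! k \<in> ?W" if "k < length \<pi>" for k
    proof (cases "k = 0 \<or> k = length \<pi> - 1")
      case True
      have "\<pi> \<noteq> []" using \<pi>(1) by (simp add: is_path_iff)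
      then have "\<pi> ! k = u \<or> \<pi> ! k = v" using True \<pi>(2,3) by (auto simp: hd_conv_nth last_conv_nth)
      then show ?thesis using u v by blast
    next
      case False
      then have "0 < k" "Suc k < length \<pi>" using that by auto
      then show ?thesis
        using path_interior_not_leaf[OF g, of \<pi> k] \<pi>(1) that by (auto simp: is_path_iff)
    qed
    then have "set \<pi> \<subseteq> ?W" by (auto simp: in_set_conv_nth)
    then have "successively ?F \<pi>"
      using \<pi>(1) unfolding is_path_iff restrict_adj_def by (blast intro: successively_mono)
    then show ?thesis using successively_rtranclp_hd[of ?F \<pi> v] \<pi> by (auto simp: is_path_iff)
  qed
  ultimately show ?thesis
    using graph_restrict_adj[OF g, of ?W] inner unfolding tree_def connected_graph_def by blast
qed

lemma automorphism_leaf_iff: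
  assumes g: "graph V E" and \<psi>: "automorphism V E \<psi>" and v: "v \<in> V"
  shows "leaf V E (\<psi> v) \<longleftrightarrow> leaf V E v"
proof
  assume leaf: "leaf V E (\<psi> v)"
  show "leaf V E v" unfolding leaf_def
  proof (intro conjI v allI impI)
    fix w1 w2 assume "E v w1 \<and> E v w2"
    moreover have "w1 \<in> V" "w2 \<in> V" using calculation graph_edgeD(2)[OF g] by auto
    ultimately have "E (\<psi> v) (\<psi> w1)" "E (\<psi> v) (\<psi> w2)" using automorphism_adj[OF \<psi>] v by auto
    then have "\<psi> w1 = \<psi> w2" using leaf unfolding leaf_def by blast
    then show "w1 = w2" using automorphism_eq_iff[OF \<psi>] \<open>w1 \<in> V\<close> \<open>w2 \<in> V\<close> by blast
  qed
next
  assume leaf: "leaf V E v"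
  show "leaf V E (\<psi> v)" unfolding leaf_def
  proof (intro conjI automorphism_in[OF \<psi> v] allI impI)
    fix w1 w2 assume w: "E (\<psi> v) w1 \<and> E (\<psi> v) w2"
    then have "w1 \<in> \<psi> ` V" "w2 \<in> \<psi> ` V"
      using graph_edgeD(2)[OF g] bij_betw_imp_surj_on[OF automorphism_bij[OF \<psi>]] by auto
    then obtain u1 u2 where u: "u1 \<in> V" "u2 \<in> V" "w1 = \<psi> u1" "w2 = \<psi> u2" by blast
    then have "E v u1" "E v u2" using automorphism_adj[OF \<psi>] v w by auto
    then show "w1 = w2" using leaf u unfolding leaf_def by blast
  qed
qed

lemma automorphism_remove_leaves:
  assumes g: "graph V E" and \<psi>: "automorphism V E \<psi>"
  shows "automorphism (V - Collect (leaf V E)) (restrict_adj (V - Collect (leaf V E)) E) \<psi>"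
proof -
  let ?W = "V - Collect (leaf V E)"
  have "\<psi> ` ?W = ?W"
  proof
    show "\<psi> ` ?W \<subseteq> ?W" using automorphism_leaf_iff[OF g \<psi>] automorphism_in[OF \<psi>] by auto
    show "?W \<subseteq> \<psi> ` ?W"
    proof
      fix x assume x: "x \<in> ?W"
      then obtain u where "u \<in> V" "x = \<psi> u"
        using bij_betw_imp_surj_on[OF automorphism_bij[OF \<psi>]] by blast
      then show "x \<in> \<psi> ` ?W" using x automorphism_leaf_iff[OF g \<psi>] by auto
    qed
  qed
  then show ?thesis using automorphism_restrict[OF \<psi>] by blast
qed

lemma tree_of_leaves_automorphism_fixes_vertex_or_flips_edge:
  assumes T: "tree V E" and \<psi>: "automorphism V E \<psi>" and leaves: "\<forall>v\<in>V. leaf V E v"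
  shows "(\<exists>v\<in>V. \<psi> v = v) \<or> (\<exists>c d. E c d \<and> \<psi> c = d \<and> \<psi> d = c)"
proof -
  have g: "graph V E" using tree_graph[OF T] .
  obtain x where x: "x \<in> V" using T unfolding tree_def by blast
  show ?thesis
  proof (cases "\<psi> x = x")
    case False
    have \<psi>x: "\<psi> x \<in> V" using automorphism_in[OF \<psi> x] .
    obtain \<pi> where \<pi>: "is_path V E \<pi>" "hd \<pi> = x" "last \<pi> = \<psi> x"
      using graph_path_exists[OF g x tree_connected[OF T x \<psi>x]] by blast
    then obtain vs where \<pi>_eq: "\<pi> = x # vs @ [\<psi> x]"
      using list_ends_split False unfolding is_path_iff by metis
    have "vs = []"
    proof (rule ccontr)
      assume "vs \<noteq> []"
      then have "\<not> leaf V E (\<pi> ! 1)"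
        using path_interior_not_leaf[OF g, of \<pi> 1] \<pi>(1) \<pi>_eq by (auto simp: is_path_iff)
      moreover have "\<pi> ! 1 \<in> set vs" using \<pi>_eq \<open>vs \<noteq> []\<close> by (cases vs) auto
      then have "\<pi> ! 1 \<in> V" using \<pi>(1) \<pi>_eq by (auto simp: is_path_iff)
      ultimately show False using leaves by blast
    qed
    then have "E x (\<psi> x)" using \<pi>(1) \<pi>_eq by (simp add: is_path_iff)
    then have "E (\<psi> x) x" "E (\<psi> x) (\<psi> (\<psi> x))"
      using graph_edgeD(4)[OF g] automorphism_adj[OF \<psi> x \<psi>x] by auto
    then have "\<psi> (\<psi> x) = x" using leaves \<psi>x unfolding leaf_def by blast
    then show ?thesis using \<open>E x (\<psi> x)\<close> by blast
  qed (use x in blast)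
qed

lemma tree_automorphism_fixes_vertex_or_flips_edge:
  assumes "tree V E" "automorphism V E \<psi>"
  shows "(\<exists>v\<in>V. \<psi> v = v) \<or> (\<exists>c d. E c d \<and> \<psi> c = d \<and> \<psi> d = c)"
  using assms
proof (induction "card V" arbitrary: V E rule: less_induct)
  case less
  note T = less.prems(1) and \<psi> = less.prems(2)
  have g: "graph V E" using tree_graph[OF T] .
  show ?case
  proof (cases "\<forall>v\<in>V. leaf V E v")
    case True
    then show ?thesis using tree_of_leaves_automorphism_fixes_vertex_or_flips_edge[OF T \<psi>] by blast
  next
    case False
    let ?W = "V - Collect (leaf V E)"
    obtain l where "leaf V E l" using tree_has_leaf[OF T] by blast
    then have "?W \<subset> V" unfolding leaf_def by blast
    then have "card ?W < card V" using g unfolding graph_def by (blast intro: psubset_card_mono)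
    then have "(\<exists>v\<in>?W. \<psi> v = v) \<or> (\<exists>c d. restrict_adj ?W E c d \<and> \<psi> c = d \<and> \<psi> d = c)"
      using less.hyps tree_remove_leaves[OF T] False automorphism_remove_leaves[OF g \<psi>] by blast
    then show ?thesis unfolding restrict_adj_def by blast
  qed
qed

lemma tree_automorphism_swap:
  assumes T: "tree V E" and \<psi>: "automorphism V E \<psi>" and x: "x \<in> V"
  shows "\<exists>\<sigma>. automorphism V E \<sigma> \<and> \<sigma> x = \<psi> x \<and> \<sigma> (\<psi> x) = x"
proof (cases "\<psi> x = x")
  case True
  then show ?thesis using automorphism_id by fastforce
next
  case False
  from tree_automorphism_fixes_vertex_or_flips_edge[OF T \<psi>] show ?thesis
  proof
    assume "\<exists>r\<in>V. \<psi> r = r"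
    then obtain m a where "E m a" "\<psi> m = m" "\<psi> a \<noteq> a" "x \<in> branch V E m a"
      using tree_fixed_branch_towards[OF T \<psi> _ _ x False] by blast
    then show ?thesis using tree_swap_at_fixed_vertex[OF T \<psi>] by blast
  next
    assume "\<exists>c d. E c d \<and> \<psi> c = d \<and> \<psi> d = c"
    then obtain c d where cd: "E c d" "\<psi> c = d" "\<psi> d = c" by blast
    then have "E d c" using graph_edgeD(4)[OF tree_graph[OF T]] by blast
    have "x \<in> branch V E d c \<or> x \<in> branch V E c d"
      using branches_of_edge_cover[OF T \<open>E c d\<close>] x by blast
    then show ?thesis
      using tree_swap_at_flipped_edge[OF T \<psi> cd] tree_swap_at_flipped_edge[OF T \<psi> \<open>E d c\<close> cd(3,2)]
      by blast
  qed
qed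

section \<open>Path covers\<close>

lemma path_cover_paths: "path_cover V E \<Q> \<Longrightarrow> Q \<in> \<Q> \<Longrightarrow> is_path V E Q"
  unfolding path_cover_def by blast

lemma path_cover_disjoint:
  "path_cover V E \<Q> \<Longrightarrow> Q \<in> \<Q> \<Longrightarrow> Q' \<in> \<Q> \<Longrightarrow> Q \<noteq> Q' \<Longrightarrow> set Q \<inter> set Q' = {}"
  unfolding path_cover_def by blast

lemma path_cover_covers: "path_cover V E \<Q> \<Longrightarrow> v \<in> V \<Longrightarrow> \<exists>Q\<in>\<Q>. v \<in> set Q"
  unfolding path_cover_def by blast

lemma path_cover_finite:
  assumes g: "graph V E" and pc: "path_cover V E \<Q>"
  shows "finite \<Q>"
proof -
  have ne: "Q \<noteq> []" if "Q \<in> \<Q>" for Q using path_cover_paths[OF pc that] by (simp add: is_path_iff)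
  have "inj_on hd \<Q>"
  proof
    fix Q Q' assume "Q \<in> \<Q>" "Q' \<in> \<Q>" "hd Q = hd Q'"
    then have "hd Q \<in> set Q \<inter> set Q'" using ne by (metis IntI hd_in_set)
    then show "Q = Q'" using path_cover_disjoint[OF pc \<open>Q \<in> \<Q>\<close> \<open>Q' \<in> \<Q>\<close>] by blast
  qed
  moreover have "hd ` \<Q> \<subseteq> V" using path_cover_paths[OF pc] by (force simp: is_path_iff)
  then have "finite (hd ` \<Q>)" using finite_subset g unfolding graph_def by blast
  ultimately show ?thesis using finite_imageD[of hd \<Q>] by blast
qed

lemma path_cover_reverse:
  assumes g: "graph V E" and pc: "path_cover V E \<Q>" and P: "P \<in> \<Q>"
  shows "path_cover V E (insert (rev P) (\<Q> - {P}))"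
proof -
  have "(\<Union>Q\<in>insert (rev P) (\<Q> - {P}). set Q) = (\<Union>Q\<in>\<Q>. set Q)" using P by auto
  then show ?thesis
    using pc P is_path_rev[OF g path_cover_paths[OF pc P]] unfolding path_cover_def by auto
qed

section \<open>Zero forcing sets and path covers\<close>

lemma zf_closure_blocked:
  assumes "u \<in> zf_closure E S" "E u v" "v \<notin> zf_closure E S"
  shows "\<exists>w. E u w \<and> w \<noteq> v \<and> w \<notin> zf_closure E S"
  using zf_closure.force[OF assms(1,2)] assms(3) by blast

lemma tree_path_exit_from_closure:
  assumes T: "tree V E" and Q: "is_path V E Q" and hd: "hd Q \<in> zf_closure E S"
    and x: "x \<in> set Q" "x \<notin> zf_closure E S"
  shows "\<exists>h w. h \<in> set Q \<and> h \<in> zf_closure E S \<and> E h w \<and> w \<notin> zf_closure E S \<and> w \<notin> set Q"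
proof -
  let ?A = "zf_closure E S"
  obtain ys v zs where split: "Q = ys @ v # zs" "v \<notin> ?A" "\<forall>y\<in>set ys. y \<in> ?A"
    using split_list_first_prop[of Q "\<lambda>y. y \<notin> ?A"] x by blast
  have "ys \<noteq> []" using split hd by auto
  then obtain ys' h where "ys = ys' @ [h]" by (cases ys rule: rev_cases) auto
  then have Q_eq: "Q = ys' @ h # v # zs" and "h \<in> ?A" using split by auto
  have succ: "successively E (h # v # zs)" and dist: "distinct (h # v # zs)"
    using Q Q_eq by (auto simp: is_path_iff successively_append_iff)
  then have "E h v" by simp
  obtain w where w: "E h w" "w \<noteq> v" "w \<notin> ?A"
    using zf_closure_blocked[OF \<open>h \<in> ?A\<close> \<open>E h v\<close> split(2)] by blast
  have "w \<notin> set Q"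
  proof
    assume "w \<in> set Q"
    then have "w \<in> set zs" using Q_eq w split(3) \<open>ys = ys' @ [h]\<close> \<open>h \<in> ?A\<close> by auto
    then obtain zs1 zs2 where zs: "zs = zs1 @ w # zs2" by (meson split_list)
    have "h # v # zs = (h # (v # zs1) @ [w]) @ zs2" using zs by simp
    then have "successively E (h # (v # zs1) @ [w])" "distinct (h # (v # zs1) @ [w])"
      using succ dist by (metis successively_append_iff, metis distinct_append)
    then have "\<not> E w h" by (rule tree_path_no_chord[OF T]) simp
    then show False using graph_edgeD(4)[OF tree_graph[OF T] w(1)] by contradiction
  qed
  then show ?thesis using Q_eq \<open>h \<in> ?A\<close> w by auto
qed

lemma path_cover_exit_branch_psubset:
  assumes T: "tree V E" and pc: "path_cover V E \<Q>" and "Q \<in> \<Q>" "Q' \<in> \<Q>"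
    and "h \<in> set Q" "w \<notin> set Q" "E h w"
    and "w \<in> set Q'" "h' \<in> set Q'" "w' \<notin> set Q'" "E h' w'" "h' \<noteq> w"
  shows "branch V E h' w' \<subset> branch V E h w"
proof -
  have g: "graph V E" using tree_graph[OF T] .
  have "h \<notin> set Q'" using path_cover_disjoint[OF pc \<open>Q \<in> \<Q>\<close> \<open>Q' \<in> \<Q>\<close>] assms(5,6,8) by blast
  have succ: "successively E Q'" and "set Q' \<subseteq> V"
    using path_cover_paths[OF pc \<open>Q' \<in> \<Q>\<close>] by (auto simp: is_path_iff)
  have symp: "symp (delete_edge E a b)" for a b by (rule symp_delete_edge[OF graph_symp[OF g]])
  have "(delete_edge E h w)\<^sup>*\<^sup>* w h'"
    by (rule successively_rtranclp[OF symp successively_delete_edge[OF succ disjI1] assms(8,9)])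
      (rule \<open>h \<notin> set Q'\<close>)
  then have h'_in: "h' \<in> branch V E h w"
    using assms(9) \<open>set Q' \<subseteq> V\<close> by (auto simp: mem_branch_iff)
  have "(delete_edge E h' w')\<^sup>*\<^sup>* h' w"
    by (rule successively_rtranclp[OF symp successively_delete_edge[OF succ disjI2] assms(9,8)])
      (rule assms(10))
  moreover have "delete_edge E h' w' w h"
    using graph_edgeD(4)[OF g \<open>E h w\<close>] \<open>h \<notin> set Q'\<close> assms(9,12)
    unfolding delete_edge_def by blast
  ultimately have "(delete_edge E h' w')\<^sup>*\<^sup>* h' h" by (rule rtranclp.rtrancl_into_rtrancl)
  then have "h \<in> branch V E w' h'"
    using graph_edgeD(1)[OF g \<open>E h w\<close>] by (simp add: mem_branch_iff delete_edge_commute)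
  then have "h \<notin> branch V E h' w'" using branches_of_edge_disjoint[OF T \<open>E h' w'\<close>] by blast
  then have "branch V E h' w' \<subseteq> branch V E h w"
    using branch_nested[OF T \<open>E h w\<close> \<open>E h' w'\<close> h'_in] by blast
  moreover have "h' \<notin> branch V E h' w'" using root_notin_branch[OF T \<open>E h' w'\<close>] .
  ultimately show ?thesis using h'_in by blast
qed

text \<open>If some vertex stayed inactive, its path would have an exit edge \<open>h w\<close> from an active
  to an inactive vertex; the path through \<open>w\<close> then has an exit edge into a strictly smaller
  branch, and so on forever.\<close>
lemma zero_forcing_set_path_cover_heads:
  assumes T: "tree V E" and pc: "path_cover V E \<Q>"
  shows "zero_forcing_set V E (hd ` \<Q>)"
proof -
  let ?A = "zf_closure E (hd ` \<Q>)"
  have g: "graph V E" using tree_graph[OF T] .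
  have exits: "\<exists>h w. h \<in> set Q \<and> h \<in> ?A \<and> E h w \<and> w \<notin> ?A \<and> w \<notin> set Q"
    if "Q \<in> \<Q>" "x \<in> set Q" "x \<notin> ?A" for Q x
    using tree_path_exit_from_closure[OF T path_cover_paths[OF pc that(1)] _ that(2,3)]
      zf_closure.init[of "hd Q" "hd ` \<Q>" E] that(1) by blast
  have no_exit: False
    if "Q \<in> \<Q>" "h \<in> set Q" "w \<notin> set Q" "h \<in> ?A" "w \<notin> ?A" "E h w" for Q h w
    using that
  proof (induction "card (branch V E h w)" arbitrary: Q h w rule: less_induct)
    case less
    obtain Q' where Q': "Q' \<in> \<Q>" "w \<in> set Q'"
      using path_cover_covers[OF pc graph_edgeD(2)[OF g \<open>E h w\<close>]] by blast
    then obtain h' w' where h'w': "h' \<in> set Q'" "h' \<in> ?A" "E h' w'" "w' \<notin> ?A" "w' \<notin> set Q'"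
      using exits \<open>w \<notin> ?A\<close> by blast
    then have "h' \<noteq> w" using \<open>w \<notin> ?A\<close> by blast
    then have "branch V E h' w' \<subset> branch V E h w"
      using path_cover_exit_branch_psubset[OF T pc less.prems(1) Q'(1) less.prems(2,3,6) Q'(2)]
        h'w'(1,5,3) by blast
    moreover have "finite (branch V E h w)"
      using finite_subset[OF branch_subset_vertices[of V E h w]] g unfolding graph_def by blast
    ultimately have "card (branch V E h' w') < card (branch V E h w)"
      by (simp add: psubset_card_mono)
    then show False using less.hyps Q'(1) h'w' by blast
  qed
  have "V \<subseteq> ?A"
  proof
    fix v assume "v \<in> V"
    then obtain Q where "Q \<in> \<Q>" "v \<in> set Q" using path_cover_covers[OF pc] by blast
    then show "v \<in> ?A" using exits no_exit by meson
  qed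
  moreover have "hd ` \<Q> \<subseteq> V"
    using path_cover_paths[OF pc] by (force simp: is_path_iff)
  ultimately show ?thesis unfolding zero_forcing_set_def by blast
qed

text \<open>Active sets obtained from \<open>S\<close> by performing forces one at a time; unlike \<open>zf_closure\<close>
  this records the chronology from which forcing chains are read off.\<close>
inductive forcing_reachable :: "('a \<Rightarrow> 'a \<Rightarrow> bool) \<Rightarrow> 'a set \<Rightarrow> 'a set \<Rightarrow> bool" for E S where
  start: "forcing_reachable E S S"
| force: "forcing_reachable E S A \<Longrightarrow> u \<in> A \<Longrightarrow> E u v \<Longrightarrow> v \<notin> A \<Longrightarrow>
    (\<forall>w. E u w \<and> w \<noteq> v \<longrightarrow> w \<in> A) \<Longrightarrow> forcing_reachable E S (insert v A)"

lemma forcing_reachable_bounds: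
  assumes "graph V E" "S \<subseteq> V" "forcing_reachable E S A"
  shows "S \<subseteq> A \<and> A \<subseteq> V"
  using assms(3) by induction (use assms(2) graph_edgeD(2)[OF assms(1)] in auto)

lemma zf_closure_subset_maximal_reachable:
  assumes "forcing_reachable E S A" "finite A" "S \<subseteq> A"
    and max: "\<And>B. forcing_reachable E S B \<Longrightarrow> card B \<le> card A"
  shows "zf_closure E S \<subseteq> A"
proof
  fix x assume "x \<in> zf_closure E S"
  then show "x \<in> A"
  proof induction
    case (force u v)
    show ?case
    proof (rule ccontr)
      assume "v \<notin> A"
      then have "forcing_reachable E S (insert v A)"
        using force assms(1) by (blast intro: forcing_reachable.force)
      then show False using max \<open>v \<notin> A\<close> \<open>finite A\<close> by fastforce
    qed
  qed (use assms(3) in blast)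
qed

text \<open>\<open>g s\<close> lists the vertices forced in turn starting from \<open>s\<close>. A vertex that is not the last of
  its chain has already forced, so all its neighbours are active.\<close>
definition forcing_chains :: "('a \<Rightarrow> 'a \<Rightarrow> bool) \<Rightarrow> 'a set \<Rightarrow> 'a set \<Rightarrow> ('a \<Rightarrow> 'a list) \<Rightarrow> bool" where
  "forcing_chains E S A g \<longleftrightarrow>
     (\<forall>s\<in>S. g s \<noteq> [] \<and> hd (g s) = s \<and> distinct (g s) \<and> successively E (g s)) \<and>
     (\<forall>s\<in>S. \<forall>t\<in>S. s \<noteq> t \<longrightarrow> set (g s) \<inter> set (g t) = {}) \<and>
     (\<Union>s\<in>S. set (g s)) = A \<and>
     (\<forall>s\<in>S. \<forall>x\<in>set (butlast (g s)). \<forall>w. E x w \<longrightarrow> w \<in> A)"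

lemma forcing_chains_insert:
  assumes g: "graph V E" and chains: "forcing_chains E S A g"
    and force: "u \<in> A" "E u v" "v \<notin> A" "\<forall>w. E u w \<and> w \<noteq> v \<longrightarrow> w \<in> A"
  shows "\<exists>g'. forcing_chains E S (insert v A) g'"
proof -
  note ch = chains[unfolded forcing_chains_def]
  obtain s0 where s0: "s0 \<in> S" "u \<in> set (g s0)" using ch force(1) by blast
  have ne: "g s0 \<noteq> []" using ch s0(1) by blast
  have "u \<notin> set (butlast (g s0))" using ch s0(1) force(2,3) by blast
  then have u_last: "u = last (g s0)" using s0(2) set_eq_insert_last_butlast[OF ne] by blast
  have v_new: "v \<notin> set (g s)" if "s \<in> S" for s using ch force(3) that by blast
  define g' where "g' = g(s0 := g s0 @ [v])"
  have chain: "g' s \<noteq> [] \<and> hd (g' s) = s \<and> distinct (g' s) \<and> successively E (g' s)"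
    if "s \<in> S" for s
  proof (cases "s = s0")
    case True
    then show ?thesis
      using ch that v_new[OF s0(1)] u_last ne force(2) unfolding g'_def
      by (auto simp: successively_append_iff)
  next
    case False
    then show ?thesis using ch that unfolding g'_def by simp
  qed
  have disjoint: "set (g' s) \<inter> set (g' t) = {}" if "s \<in> S" "t \<in> S" "s \<noteq> t" for s t
  proof -
    have "set (g s) \<inter> set (g t) = {}" using ch that by blast
    then show ?thesis using v_new that unfolding g'_def by auto
  qed
  have union: "(\<Union>s\<in>S. set (g' s)) = insert v A"
    using ch s0(1) unfolding g'_def by (auto split: if_splits)
  have saturated: "w \<in> insert v A" if "s \<in> S" "x \<in> set (butlast (g' s))" "E x w" for s x w
  proof (cases "s = s0")
    case True
    then have "x = u \<or> x \<in> set (butlast (g s0))"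
      using that(2) set_eq_insert_last_butlast[OF ne] u_last unfolding g'_def by auto
    then show ?thesis using ch s0(1) force(4) that(3) by blast
  next
    case False
    then show ?thesis using ch that unfolding g'_def by auto
  qed
  show ?thesis unfolding forcing_chains_def using chain disjoint union saturated by blast
qed

lemma forcing_reachable_chains:
  assumes "graph V E" "forcing_reachable E S A"
  shows "\<exists>g. forcing_chains E S A g"
  using assms(2)
proof induction
  case start
  show ?case by (rule exI[of _ "\<lambda>s. [s]"]) (auto simp: forcing_chains_def)
next
  case (force A u v)
  then show ?case using forcing_chains_insert[OF assms(1)] by blast
qed

lemma path_cover_of_zero_forcing_set:
  assumes g: "graph V E" and zf: "zero_forcing_set V E S"
  shows "\<exists>\<Q>. path_cover V E \<Q> \<and> card \<Q> \<le> card S"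
proof -
  have SV: "S \<subseteq> V" using zf unfolding zero_forcing_set_def by blast
  have fin: "finite V" using g unfolding graph_def by blast
  have "card A < Suc (card V)" if "forcing_reachable E S A" for A
    using forcing_reachable_bounds[OF g SV that] card_mono[OF fin] by (simp add: less_Suc_eq_le)
  then obtain A where A: "forcing_reachable E S A"
    and max: "\<And>B. forcing_reachable E S B \<Longrightarrow> card B \<le> card A"
    using ex_has_greatest_nat[of "forcing_reachable E S" S card "Suc (card V)"]
      forcing_reachable.start by blast
  have AV: "S \<subseteq> A" "A \<subseteq> V" using forcing_reachable_bounds[OF g SV A] by auto
  have "zf_closure E S \<subseteq> A"
    using zf_closure_subset_maximal_reachable[OF A finite_subset[OF AV(2) fin] AV(1) max] .
  then have "A = V" using zf AV unfolding zero_forcing_set_def by blast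
  obtain ch where ch: "forcing_chains E S V ch"
    using forcing_reachable_chains[OF g A] \<open>A = V\<close> by blast
  note ch = ch[unfolded forcing_chains_def]
  have "path_cover V E (ch ` S)"
    unfolding path_cover_def is_path_iff
  proof (intro conjI)
    show "\<forall>P\<in>ch ` S. P \<noteq> [] \<and> distinct P \<and> set P \<subseteq> V \<and> successively E P"
      using ch by auto
    show "\<forall>P\<in>ch ` S. \<forall>Q\<in>ch ` S. P \<noteq> Q \<longrightarrow> set P \<inter> set Q = {}"
    proof (intro ballI impI)
      fix P Q assume "P \<in> ch ` S" "Q \<in> ch ` S" "P \<noteq> Q"
      then obtain s t where "s \<in> S" "t \<in> S" "P = ch s" "Q = ch t" "s \<noteq> t" by blast
      then show "set P \<inter> set Q = {}" using ch by blast
    qed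
    show "(\<Union>P\<in>ch ` S. set P) = V"
      using ch by simp
  qed
  moreover have "card (ch ` S) \<le> card S"
    using card_image_le finite_subset[OF SV fin] by blast
  ultimately show ?thesis by blast
qed

section \<open>Iso-unique zero forcing trees\<close>

lemma min_zero_forcing_set_heads:
  assumes T: "tree V E" and mpc: "min_path_cover V E \<P>" and pc: "path_cover V E \<Q>"
    and le: "card \<Q> \<le> card \<P>"
  shows "min_zero_forcing_set V E (hd ` \<Q>)"
proof -
  have g: "graph V E" using tree_graph[OF T] .
  have "card (hd ` \<Q>) \<le> card S" if zf: "zero_forcing_set V E S" for S
  proof -
    obtain \<R> where "path_cover V E \<R>" "card \<R> \<le> card S"
      using path_cover_of_zero_forcing_set[OF g zf] by blast
    moreover have "card \<P> \<le> card \<R>" using mpc calculation(1) unfolding min_path_cover_def by blast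
    moreover have "card (hd ` \<Q>) \<le> card \<Q>" using card_image_le[OF path_cover_finite[OF g pc]] .
    ultimately show ?thesis using le by linarith
  qed
  then show ?thesis
    unfolding min_zero_forcing_set_def using zero_forcing_set_path_cover_heads[OF T pc] by blast
qed

text \<open>Orbit counting: \<open>\<phi>\<close> maps the orbit of \<open>a\<close> into itself, so if \<open>b\<close> were outside it,
  \<open>\<phi>\<close> would inject \<open>insert a R\<close> \<inter> orbit into the smaller set \<open>R\<close> \<inter> orbit.\<close>
lemma automorphism_maps_exchanged_element:
  assumes \<phi>: "automorphism V E \<phi>" and img: "\<phi> ` insert a R = insert b R"
    and "a \<notin> R" "b \<notin> R" "R \<subseteq> V" "a \<in> V" "finite R"
  shows "\<exists>\<psi>. automorphism V E \<psi> \<and> \<psi> a = b"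
proof (rule ccontr)
  assume no: "\<not> ?thesis"
  define orbit where "orbit = {h a | h. automorphism V E h}"
  have "a \<in> orbit" unfolding orbit_def using automorphism_id[of V E] by (auto intro!: exI[of _ id])
  have "b \<notin> orbit" unfolding orbit_def using no by blast
  have closed: "\<phi> v \<in> orbit" if v: "v \<in> orbit" for v
  proof -
    obtain h where "automorphism V E h" "v = h a" using v unfolding orbit_def by blast
    then show ?thesis
      using automorphism_comp[OF \<phi>, of h] unfolding orbit_def by (auto intro!: exI[of _ "\<phi> \<circ> h"])
  qed
  have sub: "\<phi> ` (insert a R \<inter> orbit) \<subseteq> R \<inter> orbit"
  proof
    fix y assume "y \<in> \<phi> ` (insert a R \<inter> orbit)"
    then obtain v where v: "v \<in> insert a R" "v \<in> orbit" "y = \<phi> v" by blast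
    then have "y \<in> insert b R" using img by blast
    moreover have "y \<in> orbit" using closed v by blast
    ultimately show "y \<in> R \<inter> orbit" using \<open>b \<notin> orbit\<close> by blast
  qed
  have "insert a R \<inter> orbit \<subseteq> V" using assms(5,6) by blast
  then have inj: "inj_on \<phi> (insert a R \<inter> orbit)"
    by (rule inj_on_subset[OF bij_betw_imp_inj_on[OF automorphism_bij[OF \<phi>]]])
  have "card (insert a R \<inter> orbit) \<le> card (R \<inter> orbit)"
    using card_inj_on_le[OF inj sub] \<open>finite R\<close> by simp
  moreover have "insert a R \<inter> orbit = insert a (R \<inter> orbit)" using \<open>a \<in> orbit\<close> by blast
  ultimately show False using \<open>a \<notin> R\<close> \<open>finite R\<close> by simp
qed

lemma iso_unique_tree_path_ends_swap:
  assumes T: "tree V E" and iu: "iso_unique_zf V E" and mpc: "min_path_cover V E \<P>" and P: "P \<in> \<P>"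
  shows "\<exists>\<sigma>. automorphism V E \<sigma> \<and> \<sigma> (hd P) = last P \<and> \<sigma> (last P) = hd P"
proof -
  have g: "graph V E" using tree_graph[OF T] .
  have pc: "path_cover V E \<P>" using mpc unfolding min_path_cover_def by blast
  have fin: "finite \<P>" using path_cover_finite[OF g pc] .
  have ne: "Q \<noteq> []" and QV: "set Q \<subseteq> V" if "Q \<in> \<P>" for Q
    using path_cover_paths[OF pc that] by (auto simp: is_path_iff)
  define \<P>' where "\<P>' = insert (rev P) (\<P> - {P})"
  have pc': "path_cover V E \<P>'" unfolding \<P>'_def using path_cover_reverse[OF g pc P] .
  have "card \<P>' \<le> card \<P>"
    unfolding \<P>'_def using card_Suc_Diff1[OF fin P] fin by (simp add: card_insert_if)
  then obtain \<phi> where \<phi>: "automorphism V E \<phi>" "\<phi> ` hd ` \<P> = hd ` \<P>'"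
    using iu min_zero_forcing_set_heads[OF T mpc] pc pc' unfolding iso_unique_zf_def by blast
  define R where "R = hd ` (\<P> - {P})"
  have "hd ` \<P> = insert (hd P) R" "hd ` \<P>' = insert (last P) R"
    unfolding R_def \<P>'_def using P ne[OF P] by (auto simp: hd_rev)
  moreover have "v \<notin> R" if "v \<in> set P" for v
    using path_cover_disjoint[OF pc _ P] ne that unfolding R_def by (fastforce dest: hd_in_set)
  moreover have "R \<subseteq> V" "finite R" unfolding R_def using ne QV fin by (auto intro: hd_in_set)
  ultimately obtain \<psi> where \<psi>: "automorphism V E \<psi>" "\<psi> (hd P) = last P"
    using automorphism_maps_exchanged_element[OF \<phi>(1)] \<phi>(2) ne[OF P] QV[OF P] by (metis hd_in_set last_in_set subsetD)
  then show ?thesis using tree_automorphism_swap[OF T \<psi>(1)] QV[OF P] ne[OF P] by (metis hd_in_set subsetD)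
qed

section \<open>The reversing automorphism\<close>

lemma reversed_path_nth:
  assumes "map \<sigma> P = rev P" "i < length P"
  shows "\<sigma> (P ! i) = P ! (length P - Suc i)"
  using arg_cong[OF assms(1), of "\<lambda>xs. xs ! i"] assms(2) by (simp add: rev_nth)

lemma reversed_odd_path_iso_components:
  assumes g: "graph V E" and \<sigma>: "automorphism V E \<sigma>" and P: "is_path V E P"
    and rev: "map \<sigma> P = rev P" and len: "length P = 2 * q + 1" and "q \<ge> 1"
  shows "let W = V - {P ! q}; F = restrict_adj W E in
    iso_induced F (component W F (P ! (q - 1))) (component W F (P ! (q + 1)))"
proof -
  let ?m = "P ! q" let ?W = "V - {?m}"
  have PV: "P ! i \<in> V" if "i < length P" for i using P that by (auto simp: is_path_iff)
  have "\<sigma> ?m = ?m" using reversed_path_nth[OF rev, of q] len by simp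
  have "\<sigma> ` ?W = \<sigma> ` V - \<sigma> ` {?m}"
    by (rule inj_on_image_set_diff[OF bij_betw_imp_inj_on[OF automorphism_bij[OF \<sigma>]]])
      (use PV[of q] len in auto)
  then have "\<sigma> ` ?W = ?W"
    using bij_betw_imp_surj_on[OF automorphism_bij[OF \<sigma>]] \<open>\<sigma> ?m = ?m\<close> by simp
  then have aut: "automorphism ?W (restrict_adj ?W E) \<sigma>" using automorphism_restrict[OF \<sigma>] by blast
  have a: "P ! (q - 1) \<in> ?W"
    using PV[of "q - 1"] nth_eq_iff_index_eq[of P "q - 1" q] P len \<open>q \<ge> 1\<close> by (auto simp: is_path_iff)
  have "\<sigma> (P ! (q - 1)) = P ! (q + 1)"
    using reversed_path_nth[OF rev, of "q - 1"] len \<open>q \<ge> 1\<close> by simp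
  with automorphism_iso_induced_components[OF graph_restrict_adj[OF g Diff_subset] aut a]
  show ?thesis by (simp add: Let_def)
qed

lemma reversed_even_path_iso_components:
  assumes g: "graph V E" and \<sigma>: "automorphism V E \<sigma>" and P: "is_path V E P"
    and rev: "map \<sigma> P = rev P" and len: "length P = 2 * q + 2"
  shows "let F = delete_edge E (P ! q) (P ! (q + 1)) in
    iso_induced F (component V F (P ! q)) (component V F (P ! (q + 1)))"
proof -
  have PV: "P ! i \<in> V" if "i < length P" for i using P that by (auto simp: is_path_iff)
  have "\<sigma> (P ! q) = P ! (q + 1)" "\<sigma> (P ! (q + 1)) = P ! q"
    using reversed_path_nth[OF rev, of q] reversed_path_nth[OF rev, of "q + 1"] len by simp_all
  then have "automorphism V (delete_edge E (P ! q) (P ! (q + 1))) \<sigma>"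
    using automorphism_delete_edge[OF \<sigma>] PV len by simp
  from automorphism_iso_induced_components[OF graph_delete_edge[OF g] this PV[of q]] show ?thesis
    using len \<open>\<sigma> (P ! q) = P ! (q + 1)\<close> by (simp add: Let_def)
qed

theorem lemma3p9:
  fixes V :: "'a set" and E :: "'a \<Rightarrow> 'a \<Rightarrow> bool" and \<P> :: "'a list set" and P :: "'a list"
  assumes "tree V E" and "iso_unique_zf V E"
    and "min_path_cover V E \<P>" and "P \<in> \<P>"
  defines "l \<equiv> length P"
  defines "x \<equiv> (\<lambda>i. P ! (i - 1))"
  defines "p \<equiv> (if odd l then (l + 1) div 2 else l div 2)"
  shows "(odd l \<and> l \<ge> 3 \<longrightarrow>
            (let W = V - {x p}; F = restrict_adj W E in
             iso_induced F (component W F (x (p - 1))) (component W F (x (p + 1)))))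
       \<and> (even l \<longrightarrow>
            (let F = delete_edge E (x p) (x (p + 1)) in
             iso_induced F (component V F (x p)) (component V F (x (p + 1)))))
       \<and> (\<exists>\<phi>. automorphism V E \<phi> \<and> \<phi> (x 1) = x l \<and> \<phi> (x l) = x 1)"
proof -
  have g: "graph V E" using tree_graph[OF assms(1)] .
  have P: "is_path V E P"
    using assms(3,4) path_cover_paths unfolding min_path_cover_def by blast
  obtain \<sigma> where \<sigma>: "automorphism V E \<sigma>" "\<sigma> (hd P) = last P" "\<sigma> (last P) = hd P"
    using iso_unique_tree_path_ends_swap[OF assms(1-4)] by blast
  have rev: "map \<sigma> P = rev P" using automorphism_reverses_path[OF assms(1) \<sigma>(1) P \<sigma>(2,3)] .
  have ends: "x 1 = hd P" "x l = last P"
    using P unfolding x_def l_def by (auto simp: is_path_iff hd_conv_nth last_conv_nth)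
  have "l \<noteq> 0" using P unfolding l_def by (simp add: is_path_iff)
  define q where "q = (l - 1) div 2"
  have "odd l \<Longrightarrow> l = 2 * q + 1 \<and> p = q + 1" "even l \<Longrightarrow> l = 2 * q + 2 \<and> p = q + 1"
    using \<open>l \<noteq> 0\<close> unfolding p_def q_def by (auto elim!: oddE evenE)
  then show ?thesis
    using reversed_odd_path_iso_components[OF g \<sigma>(1) P rev, of q]
      reversed_even_path_iso_components[OF g \<sigma>(1) P rev, of q] \<sigma> ends
    unfolding x_def l_def[symmetric] by (auto simp: Let_def)
qed

end
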